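(* Let $n,k$ be integers with $2<2k\le n$. Suppose that the integer program $( * )$ has a solution but no trivial solution, and let $(\mathsf{u},\mathsf{v}_+,\mathsf{v}_-,r,t)$ be a (necessarily nontrivial) solution of $( * )$. Then there is a homomorphism $K_{4r+2}\to \mathrm{Pet}(n,k)^{2r+1}$ (i.e., $\mathrm{Pet}(n,k)^{2r+1}$ contains a clique on $4r+2$ vertices).
   Context: For integers $n,k$ with $2<2k\le n$, the generalized Petersen graph $\mathrm{Pet}(n,k)$ has vertex set $\{u_0,\dots,u_{n-1}\}\cup\{v_0,\dots,v_{n-1}\}$ and edge set $\{u_iu_{i+1}\}\cup\{u_iv_i\}\cup\{v_iv_{i+k}\}$, indices modulo $n$. The integer program $( * )$ is: minimize $\mathsf{u}+\mathsf{v}_++\mathsf{v}_-$ over integers $\mathsf{u},\mathsf{v}_+,\mathsf{v}_-,r\ge 0$ and $t\in\mathbb{Z}$ subject to $\mathsf{u}+k(\mathsf{v}_+-\mathsf{v}_-)=tn$ and $\mathsf{u}+\mathsf{v}_++\mathsf{v}_-=2r+1$. A solution of $( * )$ is a minimizer $(\mathsf{u},\mathsf{v}_+,\mathsf{v}_-,r,t)$; it is trivial if $\mathsf{u}=0$ or $\mathsf{v}_++\mathsf{v}_-=0$, and nontrivial otherwise. For a graph $G$ and positive integer $m$, the power graph $G^m$ has vertex set $V(G)$, two distinct vertices being adjacent iff there is a walk of length exactly $m$ between them in $G$. A homomorphism $G\to H$ is a map $V(G)\to V(H)$ sending edges to edges. *)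

theory Defs
  imports Main
begin

text \<open>Graphs are given by a vertex set and an adjacency relation.
Vertices of Pet(n,k): (False, i) is u_i and (True, i) is v_i, for i < n.\<close>

type_synonym pvert = "bool \<times> nat"

definition pet_verts :: "nat \<Rightarrow> pvert set" where
  "pet_verts n = {(b, i). i < n}"

definition pet_edge :: "nat \<Rightarrow> nat \<Rightarrow> pvert \<Rightarrow> pvert \<Rightarrow> bool" where
  "pet_edge n k x y \<longleftrightarrow>
     (\<exists>i<n. (x = (False, i) \<and> y = (False, (i + 1) mod n))
          \<or> (x = (False, i) \<and> y = (True, i))
          \<or> (x = (True, i) \<and> y = (True, (i + k) mod n)))"

definition pet_adj :: "nat \<Rightarrow> nat \<Rightarrow> pvert \<Rightarrow> pvert \<Rightarrow> bool" where
  "pet_adj n k x y \<longleftrightarrow> pet_edge n k x y \<or> pet_edge n k y x"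

definition has_walk :: "'a set \<Rightarrow> ('a \<Rightarrow> 'a \<Rightarrow> bool) \<Rightarrow> nat \<Rightarrow> 'a \<Rightarrow> 'a \<Rightarrow> bool" where
  "has_walk V adj m x y \<longleftrightarrow>
     (\<exists>p :: nat \<Rightarrow> 'a. p 0 = x \<and> p m = y \<and> (\<forall>j\<le>m. p j \<in> V)
        \<and> (\<forall>j<m. adj (p j) (p (Suc j))))"

definition power_adj :: "'a set \<Rightarrow> ('a \<Rightarrow> 'a \<Rightarrow> bool) \<Rightarrow> nat \<Rightarrow> 'a \<Rightarrow> 'a \<Rightarrow> bool" where
  "power_adj V adj m x y \<longleftrightarrow> x \<in> V \<and> y \<in> V \<and> x \<noteq> y \<and> has_walk V adj m x y"

definition complete_hom :: "nat \<Rightarrow> 'a set \<Rightarrow> ('a \<Rightarrow> 'a \<Rightarrow> bool) \<Rightarrow> (nat \<Rightarrow> 'a) \<Rightarrow> bool" where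
  "complete_hom N V adj f \<longleftrightarrow>
     (\<forall>i<N. f i \<in> V) \<and> (\<forall>i<N. \<forall>j<N. i \<noteq> j \<longrightarrow> adj (f i) (f j))"

definition ip_feasible :: "nat \<Rightarrow> nat \<Rightarrow> nat \<Rightarrow> nat \<Rightarrow> nat \<Rightarrow> nat \<Rightarrow> int \<Rightarrow> bool" where
  "ip_feasible n k u vp vm r t \<longleftrightarrow>
     int u + int k * (int vp - int vm) = t * int n \<and> u + vp + vm = 2 * r + 1"

definition ip_solution :: "nat \<Rightarrow> nat \<Rightarrow> nat \<Rightarrow> nat \<Rightarrow> nat \<Rightarrow> nat \<Rightarrow> int \<Rightarrow> bool" where
  "ip_solution n k u vp vm r t \<longleftrightarrow> ip_feasible n k u vp vm r t \<and>
     (\<forall>u' vp' vm' r' t'. ip_feasible n k u' vp' vm' r' t' \<longrightarrow> u + vp + vm \<le> u' + vp' + vm')"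

definition ip_trivial :: "nat \<Rightarrow> nat \<Rightarrow> nat \<Rightarrow> bool" where
  "ip_trivial u vp vm \<longleftrightarrow> u = 0 \<or> vp + vm = 0"

end

theory Submission
  imports Defs "HOL-Number_Theory.Cong"
begin

(*
  Pet(n,k) is covered by the lattice graph on Z^2 x {outer, inner}: outer vertices are joined
  along x, inner vertices along y, each point to its twin by a spoke, and (x, y) lies over the
  index x + k y mod n.  A solution of the integer program is a vector (u, v+ - v-) of the kernel
  lattice with odd l1-norm L = 2r+1, and minimality says that no odd kernel vector is shorter.
  The L lattice points of the closed staircase that takes u steps in x and then |v+ - v-| steps
  in y, each taken in both layers, give 2L = 4r+2 vertices.  Between two of them one of the two
  arcs of the staircase has the parity that yields a walk of length at most L and of the parity
  of L, which is then padded to length exactly L by going along a spoke and back.  Two distinct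
  ones never coincide, since that would give an odd kernel vector shorter than L.
*)

lemma has_walk_refl: "x \<in> V \<Longrightarrow> has_walk V adj 0 x x"
  unfolding has_walk_def by (rule exI[of _ "\<lambda>_. x"]) auto

lemma has_walk_edge: "x \<in> V \<Longrightarrow> y \<in> V \<Longrightarrow> adj x y \<Longrightarrow> has_walk V adj 1 x y"
  unfolding has_walk_def by (rule exI[of _ "\<lambda>j. if j = 0 then x else y"]) (auto simp: le_Suc_eq)

lemma has_walk_append:
  assumes "has_walk V adj m1 x y" "has_walk V adj m2 y z"
  shows "has_walk V adj (m1 + m2) x z"
proof -
  obtain p where p: "p 0 = x" "p m1 = y" "\<forall>j\<le>m1. p j \<in> V" "\<forall>j<m1. adj (p j) (p (Suc j))"
    using assms(1) unfolding has_walk_def by blast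
  obtain q where q: "q 0 = y" "q m2 = z" "\<forall>j\<le>m2. q j \<in> V" "\<forall>j<m2. adj (q j) (q (Suc j))"
    using assms(2) unfolding has_walk_def by blast
  define w where "w j = (if j \<le> m1 then p j else q (j - m1))" for j
  have "adj (w j) (w (Suc j))" if "j < m1 + m2" for j
  proof (cases "j < m1")
    case True
    then show ?thesis using p by (auto simp: w_def)
  next
    case False
    then have "Suc j - m1 = Suc (j - m1)" "j - m1 < m2" using that by auto
    then show ?thesis using q False p(2) by (cases "j = m1") (auto simp: w_def)
  qed
  moreover have "w 0 = x" "w (m1 + m2) = z" "\<forall>j\<le>m1 + m2. w j \<in> V"
    using p q by (auto simp: w_def)
  ultimately show ?thesis unfolding has_walk_def by blast
qed

lemma has_walk_reverse:
  assumes "has_walk V adj m x y" "\<And>x y. adj x y \<Longrightarrow> adj y x"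
  shows "has_walk V adj m y x"
proof -
  obtain p where p: "p 0 = x" "p m = y" "\<forall>j\<le>m. p j \<in> V" "\<forall>j<m. adj (p j) (p (Suc j))"
    using assms(1) unfolding has_walk_def by blast
  define w where "w j = p (m - j)" for j
  have "adj (w j) (w (Suc j))" if "j < m" for j
  proof -
    have "adj (p (m - Suc j)) (p (Suc (m - Suc j)))" using p(4) that by simp
    moreover have "Suc (m - Suc j) = m - j" using that by simp
    ultimately show ?thesis using assms(2) by (simp add: w_def)
  qed
  moreover have "w 0 = y" "w m = x" "\<forall>j\<le>m. w j \<in> V" using p by (auto simp: w_def)
  ultimately show ?thesis unfolding has_walk_def by blast
qed

lemma has_walk_add_even:
  assumes "has_walk V adj m x y" "y' \<in> V" "adj y y'" "adj y' y"
  shows "has_walk V adj (m + 2 * j) x y"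
proof (induction j)
  case (Suc j)
  have "y \<in> V" using assms(1) unfolding has_walk_def by blast
  then have "has_walk V adj (1 + 1) y y"
    using assms(2-4) by (intro has_walk_append has_walk_edge)
  from has_walk_append[OF Suc this] show ?case by simp
qed (use assms(1) in simp)

lemma of_nat_min_add_diff: "int (min s a) + int (s - a) = int s"
  by (cases "s \<le> a") auto

lemma pet_adj_sym: "pet_adj n k x y \<Longrightarrow> pet_adj n k y x"
  unfolding pet_adj_def by blast

locale petersen =
  fixes n k :: nat
  assumes n_pos: "0 < n"
begin

abbreviation walk :: "nat \<Rightarrow> pvert \<Rightarrow> pvert \<Rightarrow> bool" where
  "walk m x y \<equiv> has_walk (pet_verts n) (pet_adj n k) m x y"

definition vtx :: "bool \<Rightarrow> int \<Rightarrow> pvert" where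
  "vtx b z = (b, nat (z mod int n))"

lemma vtx_in_pet_verts: "vtx b z \<in> pet_verts n"
  using n_pos by (auto simp: vtx_def pet_verts_def nat_less_iff)

lemma vtx_eq_iff: "vtx b z = vtx b' z' \<longleftrightarrow> b = b' \<and> [z = z'] (mod int n)"
  using n_pos by (auto simp: vtx_def cong_def eq_nat_nat_iff)

lemma vtx_cong: "[z = z'] (mod int n) \<Longrightarrow> vtx b z = vtx b z'"
  by (simp add: vtx_eq_iff)

lemma nat_mod_add:
  assumes "0 \<le> c"
  shows "nat ((z + c) mod int n) = (nat (z mod int n) + nat c) mod n"
proof -
  have "int ((nat (z mod int n) + nat c) mod n) = (z mod int n + c) mod int n"
    using n_pos assms by (simp add: zmod_int)
  also have "\<dots> = (z + c) mod int n" by (simp add: mod_add_left_eq)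
  finally show ?thesis by (metis nat_int)
qed

lemma walk_edge: "pet_adj n k x y \<Longrightarrow> x \<in> pet_verts n \<Longrightarrow> y \<in> pet_verts n \<Longrightarrow> walk 1 x y"
  by (rule has_walk_edge)

lemma walk_reverse: "walk m x y \<Longrightarrow> walk m y x"
  by (rule has_walk_reverse[OF _ pet_adj_sym])

lemma pet_adj_spoke: "pet_adj n k (vtx b z) (vtx (\<not> b) z)"
proof -
  have adj: "pet_adj n k (vtx False z) (vtx True z)"
    unfolding pet_adj_def pet_edge_def using n_pos
    by (intro disjI1 exI[of _ "nat (z mod int n)"]) (auto simp: vtx_def nat_less_iff)
  show ?thesis using adj pet_adj_sym[OF adj] by (cases b) simp_all
qed

lemma walk_spoke: "walk 1 (vtx b z) (vtx (\<not> b) z)"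
  by (intro walk_edge pet_adj_spoke vtx_in_pet_verts)

lemma walk_run:
  assumes step: "\<And>z. pet_adj n k (vtx b z) (vtx b (z + h))"
  shows "walk (nat \<bar>d\<bar>) (vtx b z) (vtx b (z + h * d))"
proof -
  have fwd: "walk m (vtx b z) (vtx b (z + h * int m))" for m z
  proof (induction m)
    case 0
    show ?case by (simp add: has_walk_refl vtx_in_pet_verts)
  next
    case (Suc m)
    have "walk 1 (vtx b (z + h * int m)) (vtx b (z + h * int m + h))"
      by (intro walk_edge step vtx_in_pet_verts)
    from has_walk_append[OF Suc this] show ?case by (simp add: algebra_simps)
  qed
  show ?thesis
  proof (cases "0 \<le> d")
    case True
    then show ?thesis using fwd[of "nat d"] by simp
  next
    case False
    then show ?thesis using walk_reverse[OF fwd[of "nat (- d)" "z + h * d"]] by simp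
  qed
qed

lemma walk_outer: "walk (nat \<bar>d\<bar>) (vtx False z) (vtx False (z + d))"
proof (rule walk_run[of False 1 d z, simplified])
  fix z
  show "pet_adj n k (vtx False z) (vtx False (z + 1))"
    unfolding pet_adj_def pet_edge_def using n_pos
    by (intro disjI1 exI[of _ "nat (z mod int n)"])
      (simp add: vtx_def nat_mod_add[of 1, simplified] nat_less_iff)
qed

lemma walk_inner: "walk (nat \<bar>d\<bar>) (vtx True z) (vtx True (z + int k * d))"
proof (rule walk_run)
  fix z
  show "pet_adj n k (vtx True z) (vtx True (z + int k))"
    unfolding pet_adj_def pet_edge_def using n_pos
    by (intro disjI1 exI[of _ "nat (z mod int n)"])
      (simp add: vtx_def nat_mod_add[of "int k", simplified] nat_less_iff)
qed

lemma walk_extend: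
  assumes "walk m x (vtx b q)" "m \<le> M" "even (M - m)"
  shows "walk M x (vtx b q)"
proof -
  have spoke: "pet_adj n k (vtx b q) (vtx (\<not> b) q)" by (rule pet_adj_spoke)
  have "walk (m + 2 * ((M - m) div 2)) x (vtx b q)"
    by (rule has_walk_add_even[OF assms(1) vtx_in_pet_verts spoke pet_adj_sym[OF spoke]])
  with assms(2,3) show ?thesis by simp
qed

text \<open>\<open>reach D p q\<close>: in the lattice \<open>\<int>\<^sup>2\<close>, which covers Pet(n,k) via
  \<open>(x, y) \<mapsto> x + k y mod n\<close> (outer edges change \<open>x\<close>, inner edges change \<open>y\<close>),
  some vector of \<open>\<ell>\<^sub>1\<close>-norm \<open>D\<close> leads from a lift of \<open>p\<close> to a lift of \<open>q\<close>.\<close>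
definition reach :: "nat \<Rightarrow> int \<Rightarrow> int \<Rightarrow> bool" where
  "reach D p q \<longleftrightarrow> (\<exists>dx dy. \<bar>dx\<bar> + \<bar>dy\<bar> = int D \<and> [p + dx + int k * dy = q] (mod int n))"

lemma reach_sym:
  assumes "reach D p q"
  shows "reach D q p"
proof -
  obtain dx dy where len: "\<bar>dx\<bar> + \<bar>dy\<bar> = int D" and "[p + dx + int k * dy = q] (mod int n)"
    using assms unfolding reach_def by blast
  then have "[q + - dx + int k * - dy = p] (mod int n)"
    by (simp add: cong_iff_dvd_diff dvd_diff_commute algebra_simps)
  then show ?thesis unfolding reach_def using len by (intro exI[of _ "- dx"] exI[of _ "- dy"]) simp
qed

lemma walk_outer_inner_if_reach:
  assumes "reach D p q"
  shows "walk (D + 1) (vtx False p) (vtx True q)"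
proof -
  obtain dx dy where len: "\<bar>dx\<bar> + \<bar>dy\<bar> = int D" and cong: "[p + dx + int k * dy = q] (mod int n)"
    using assms unfolding reach_def by blast
  have "walk (nat \<bar>dx\<bar> + 1 + nat \<bar>dy\<bar>) (vtx False p) (vtx True (p + dx + int k * dy))"
    using has_walk_append[OF has_walk_append[OF walk_outer[of dx p] walk_spoke[of False "p + dx", simplified]]
        walk_inner[of dy "p + dx"]]
    by (simp add: add.assoc)
  moreover have "nat \<bar>dx\<bar> + 1 + nat \<bar>dy\<bar> = D + 1" using len by linarith
  ultimately show ?thesis using vtx_cong[OF cong] by simp
qed

lemma walk_if_reach:
  assumes "reach D p q"
  shows "walk (D + (if b = b' then 2 else 1)) (vtx b p) (vtx b' q)"
proof (cases b; cases b')
  assume "\<not> b" "\<not> b'"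
  then show ?thesis
    using has_walk_append[OF walk_outer_inner_if_reach[OF assms] walk_spoke[of True q, simplified]] by simp
next
  assume "\<not> b" "b'"
  then show ?thesis using walk_outer_inner_if_reach[OF assms] by simp
next
  assume "b" "\<not> b'"
  then show ?thesis using walk_reverse[OF walk_outer_inner_if_reach[OF reach_sym[OF assms]]] by simp
next
  assume "b" "b'"
  then show ?thesis
    using has_walk_append[OF walk_spoke[of True p, simplified] walk_outer_inner_if_reach[OF assms]] by simp
qed

text \<open>Position \<open>s\<close> on the staircase that takes \<open>a\<close> steps in \<open>x\<close> and then steps in \<open>y\<close>
  in the direction \<open>sgn c\<close>, projected to \<open>x + k y\<close>; the truncated difference \<open>s - a\<close>
  is its \<open>y\<close>-distance from the axis.\<close>
definition stair :: "nat \<Rightarrow> int \<Rightarrow> nat \<Rightarrow> int" where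
  "stair a c s = int (min s a) + int k * (sgn c * int (s - a))"

lemma reach_stair:
  assumes "s \<le> s'" "int s' \<le> int a + \<bar>c\<bar>"
  shows "reach (s' - s) (stair a c s) (stair a c s')"
proof -
  define dx where "dx = int (min s' a) - int (min s a)"
  define dy where "dy = sgn c * (int (s' - a) - int (s - a))"
  have "\<bar>dy\<bar> = int (s' - a) - int (s - a)"
  proof (cases "c = 0")
    case True
    then show ?thesis using assms by (simp add: dy_def)
  next
    case False
    then show ?thesis using assms(1) by (simp add: dy_def abs_mult)
  qed
  moreover have "\<bar>dx\<bar> = dx" using assms(1) by (simp add: dx_def)
  ultimately have "\<bar>dx\<bar> + \<bar>dy\<bar> = int (s' - s)"
    using of_nat_min_add_diff[of s a] of_nat_min_add_diff[of s' a] assms(1) by (simp add: dx_def)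
  moreover have "stair a c s + dx + int k * dy = stair a c s'"
    by (simp add: stair_def dx_def dy_def algebra_simps)
  ultimately show ?thesis unfolding reach_def by (metis cong_refl)
qed

lemma reach_stair_around:
  assumes "s \<le> s'" "int a + \<bar>c\<bar> = int L" "s' \<le> L" "int n dvd int a + int k * c"
  shows "reach (L - (s' - s)) (stair a c s') (stair a c s)"
proof -
  define dx where "dx = int a - int (min s' a) + int (min s a)"
  define dy where "dy = sgn c * (\<bar>c\<bar> - int (s' - a) + int (s - a))"
  have le_c: "int (s' - a) \<le> \<bar>c\<bar>" using assms(2,3) by (cases "s' \<le> a") auto
  have "\<bar>dy\<bar> = \<bar>c\<bar> - int (s' - a) + int (s - a)"
  proof (cases "c = 0")
    case True
    then show ?thesis using le_c assms(1) by (simp add: dy_def)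
  next
    case False
    then show ?thesis using le_c by (simp add: dy_def abs_mult)
  qed
  moreover have "\<bar>dx\<bar> = dx" by (simp add: dx_def)
  ultimately have len: "\<bar>dx\<bar> + \<bar>dy\<bar> = int (L - (s' - s))"
    using of_nat_min_add_diff[of s a] of_nat_min_add_diff[of s' a] assms(1-3) by (simp add: dx_def)
  have "int k * dy = int k * c - int k * (sgn c * int (s' - a)) + int k * (sgn c * int (s - a))"
    by (simp add: dy_def ring_distribs sgn_mult_abs)
  then have "stair a c s' + dx + int k * dy - stair a c s = int a + int k * c"
    unfolding stair_def dx_def by linarith
  then have "[stair a c s' + dx + int k * dy = stair a c s] (mod int n)"
    using assms(4) by (simp add: cong_iff_dvd_diff)
  with len show ?thesis unfolding reach_def by blast
qed

end

locale pet_odd_girth = petersen +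
  fixes L :: nat
  assumes odd_L: "odd L"
    and odd_girth: "\<And>dx dy. int n dvd dx + int k * dy \<Longrightarrow> odd (\<bar>dx\<bar> + \<bar>dy\<bar>) \<Longrightarrow>
      int L \<le> \<bar>dx\<bar> + \<bar>dy\<bar>"
begin

lemma reach_closed_odd_ge:
  assumes "reach D p q" "[p = q] (mod int n)" "odd D"
  shows "L \<le> D"
proof -
  obtain dx dy where len: "\<bar>dx\<bar> + \<bar>dy\<bar> = int D" and "int n dvd p + dx + int k * dy - q"
    using assms(1) unfolding reach_def cong_iff_dvd_diff by blast
  moreover have "int n dvd p - q" using assms(2) by (simp add: cong_iff_dvd_diff)
  moreover have "dx + int k * dy = (p + dx + int k * dy - q) - (p - q)" by simp
  ultimately have "int n dvd dx + int k * dy" by (metis dvd_diff)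
  moreover have "odd (\<bar>dx\<bar> + \<bar>dy\<bar>)" using len assms(3) by simp
  ultimately have "int L \<le> \<bar>dx\<bar> + \<bar>dy\<bar>" by (rule odd_girth)
  with len show ?thesis by simp
qed

lemma clique_pair:
  assumes "reach d p q" "reach (L - d) p q" "d < L" "b = b' \<Longrightarrow> 0 < d"
  shows "vtx b p \<noteq> vtx b' q \<and> walk L (vtx b p) (vtx b' q)"
proof -
  \<comment> \<open>Of the two arcs take the one that is odd within a layer and even between the layers.\<close>
  define D where "D = (if odd d \<longleftrightarrow> b = b' then d else L - d)"
  have reach_D: "reach D p q" using assms(1,2) by (simp add: D_def)
  have "odd (L - d) \<longleftrightarrow> even d" using odd_L assms(3) by simp
  then have parity: "odd D \<longleftrightarrow> b = b'" by (auto simp: D_def)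
  have "0 < d" if "D \<noteq> d"
  proof (rule ccontr)
    assume "\<not> 0 < d"
    with that assms(4) show False by (cases "b = b'") (auto simp: D_def)
  qed
  then have "D < L" using assms(3) by (cases "D = d") (auto simp: D_def)
  define m where "m = D + (if b = b' then 2 else 1)"
  have "m \<le> L \<and> even (L - m)"
  proof (cases "b = b'")
    case True
    then have "odd D" using parity by simp
    with odd_L \<open>D < L\<close> True show ?thesis unfolding m_def by (auto elim!: oddE)
  next
    case False
    then have "even D" using parity by simp
    with odd_L \<open>D < L\<close> False show ?thesis unfolding m_def by (auto elim!: oddE evenE)
  qed
  then have "walk L (vtx b p) (vtx b' q)"
    using walk_extend[OF walk_if_reach[OF reach_D, of b b', folded m_def]] by blast
  moreover have "vtx b p \<noteq> vtx b' q"
    using reach_closed_odd_ge[OF reach_D] parity \<open>D < L\<close> by (auto simp: vtx_eq_iff)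
  ultimately show ?thesis by blast
qed

lemma complete_hom_of_cycle:
  fixes pos :: "nat \<Rightarrow> int"
  assumes reach_pos: "\<And>s s'. s \<le> s' \<Longrightarrow> s' < L \<Longrightarrow>
      reach (s' - s) (pos s) (pos s') \<and> reach (L - (s' - s)) (pos s) (pos s')"
  shows "complete_hom (2 * L) (pet_verts n) (power_adj (pet_verts n) (pet_adj n k) L)
           (\<lambda>i. vtx (L \<le> i) (pos (i mod L)))"
proof -
  have ordered: "vtx b (pos s) \<noteq> vtx b' (pos s') \<and> walk L (vtx b (pos s)) (vtx b' (pos s'))"
    if "s \<le> s'" "s' < L" "b = b' \<Longrightarrow> s \<noteq> s'" for b b' s s'
    by (rule clique_pair[where d = "s' - s"]) (use reach_pos[OF that(1,2)] that in auto)
  have pair: "vtx b (pos s) \<noteq> vtx b' (pos s') \<and> walk L (vtx b (pos s)) (vtx b' (pos s'))"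
    if "s < L" "s' < L" "(b, s) \<noteq> (b', s')" for b b' s s'
  proof (cases "s \<le> s'")
    case True
    then show ?thesis using ordered[of s s' b b'] that by auto
  next
    case False
    then show ?thesis using ordered[of s' s b' b] that walk_reverse by auto
  qed
  have split: "i = (if L \<le> i then L else 0) + i mod L" if "i < 2 * L" for i
    using that by (cases "L \<le> i") (simp_all add: le_mod_geq)
  have L_pos: "0 < L" using odd_L by (rule odd_pos)
  show ?thesis
    unfolding complete_hom_def power_adj_def
  proof (intro conjI allI impI vtx_in_pet_verts)
    fix i j assume ij: "i < 2 * L" "j < 2 * L" "i \<noteq> j"
    have "(L \<le> i, i mod L) \<noteq> (L \<le> j, j mod L)"
    proof
      assume "(L \<le> i, i mod L) = (L \<le> j, j mod L)"
      then have "(if L \<le> i then L else 0) + i mod L = (if L \<le> j then L else 0) + j mod L" by simp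
      then show False using split[OF ij(1)] split[OF ij(2)] ij(3) by linarith
    qed
    then show "vtx (L \<le> i) (pos (i mod L)) \<noteq> vtx (L \<le> j) (pos (j mod L))"
      and "walk L (vtx (L \<le> i) (pos (i mod L))) (vtx (L \<le> j) (pos (j mod L)))"
      using pair[OF mod_less_divisor[OF L_pos] mod_less_divisor[OF L_pos]] by simp_all
  qed
qed

end

lemma ip_solution_odd_girth:
  assumes "ip_solution n k u vp vm r t" "int n dvd dx + int k * dy" "odd (\<bar>dx\<bar> + \<bar>dy\<bar>)"
  shows "int (2 * r + 1) \<le> \<bar>dx\<bar> + \<bar>dy\<bar>"
proof -
  define e where "e = (if 0 \<le> dx then dy else - dy)"
  obtain t0 where "dx + int k * dy = int n * t0" using assms(2) by (elim dvdE)
  then have t': "\<bar>dx\<bar> + int k * e = (if 0 \<le> dx then t0 else - t0) * int n"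
    by (auto simp: e_def algebra_simps)
  have norm: "nat \<bar>dx\<bar> + nat e + nat (- e) = nat (\<bar>dx\<bar> + \<bar>dy\<bar>)"
    by (auto simp: e_def)
  then obtain r' where r': "nat \<bar>dx\<bar> + nat e + nat (- e) = 2 * r' + 1"
    using assms(3) by (metis even_nat_iff abs_ge_zero add_nonneg_nonneg oddE)
  have "int (nat e) - int (nat (- e)) = e" "int (nat \<bar>dx\<bar>) = \<bar>dx\<bar>" by auto
  then have "ip_feasible n k (nat \<bar>dx\<bar>) (nat e) (nat (- e)) r' (if 0 \<le> dx then t0 else - t0)"
    unfolding ip_feasible_def using t' r' by simp
  with assms(1) have "u + vp + vm \<le> nat \<bar>dx\<bar> + nat e + nat (- e)"
    unfolding ip_solution_def by blast
  moreover have "u + vp + vm = 2 * r + 1"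
    using assms(1) unfolding ip_solution_def ip_feasible_def by blast
  ultimately show ?thesis using norm by linarith
qed

lemma ip_solution_norm:
  assumes "ip_solution n k u vp vm r t"
  shows "int u + \<bar>int vp - int vm\<bar> = int (2 * r + 1)"
proof -
  have eq: "int u + int k * (int vp - int vm) = t * int n" and sum: "u + vp + vm = 2 * r + 1"
    using assms unfolding ip_solution_def ip_feasible_def by blast+
  have abs_diff: "\<bar>int vp - int vm\<bar> = int vp + int vm - 2 * int (min vp vm)"
    by (cases "vp \<le> vm") auto
  have "int u + \<bar>int vp - int vm\<bar> = int (2 * r + 1) - 2 * int (min vp vm)"
    using sum abs_diff by simp
  then have "odd (int u + \<bar>int vp - int vm\<bar>)" by simp
  moreover have "int n dvd int u + int k * (int vp - int vm)" using eq by simp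
  ultimately have "int (2 * r + 1) \<le> int u + \<bar>int vp - int vm\<bar>"
    using ip_solution_odd_girth[OF assms, of "int u" "int vp - int vm"] by simp
  then show ?thesis using sum abs_diff by simp
qed

theorem theorem3:
  fixes n k u vp vm r :: nat and t :: int
  assumes "2 < 2 * k" and "2 * k \<le> n"
    and "\<exists>u' vp' vm' r' t'. ip_solution n k u' vp' vm' r' t'"
    and "\<forall>u' vp' vm' r' t'. ip_solution n k u' vp' vm' r' t' \<longrightarrow> \<not> ip_trivial u' vp' vm'"
    and "ip_solution n k u vp vm r t"
  shows "\<exists>f. complete_hom (4 * r + 2) (pet_verts n)
                (power_adj (pet_verts n) (pet_adj n k) (2 * r + 1)) f"
proof -
  let ?L = "2 * r + 1" and ?c = "int vp - int vm"
  have sol: "ip_solution n k u vp vm r t" by fact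
  interpret pet_odd_girth n k ?L
    using assms(1,2) ip_solution_odd_girth[OF sol] by unfold_locales auto
  have norm: "int u + \<bar>?c\<bar> = int ?L" by (rule ip_solution_norm[OF sol])
  have period: "int n dvd int u + int k * ?c"
    using sol unfolding ip_solution_def ip_feasible_def by simp
  have "complete_hom (2 * ?L) (pet_verts n) (power_adj (pet_verts n) (pet_adj n k) ?L)
          (\<lambda>i. vtx (?L \<le> i) (stair u ?c (i mod ?L)))"
  proof (rule complete_hom_of_cycle)
    fix s s' :: nat
    assume s: "s \<le> s'" "s' < ?L"
    show "reach (s' - s) (stair u ?c s) (stair u ?c s') \<and>
        reach (?L - (s' - s)) (stair u ?c s) (stair u ?c s')"
    proof
      show "reach (s' - s) (stair u ?c s) (stair u ?c s')"
        using s norm by (intro reach_stair) auto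
      show "reach (?L - (s' - s)) (stair u ?c s) (stair u ?c s')"
        using s norm period by (intro reach_sym[OF reach_stair_around]) auto
    qed
  qed
  moreover have "2 * ?L = 4 * r + 2" by simp
  ultimately show ?thesis by auto
qed

end
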